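(* Let $\ell,d\ge0$ be integers, $n=2^\ell$, $m=2^d$, and $\lambda=m/n=2^{d-\ell}$. Let $a$ be an integer with $d\ge a\ge\max\{1,d-\ell\}$. Then there exist a positive integer $N$ and a set $S\subseteq\mathbb{F}_2^N\setminus\{0\}$ of $m$ distinct nonzero vectors such that, for a uniformly random linear map $h:\mathbb{F}_2^N\to\mathbb{F}_2^\ell$, \[ \Pr\left[|\{x\in S: h(x)=0\}|>2^a-2\right]\ge\gamma^2\lambda^a2^{-a^2}, \] where $\gamma:=\prod_{j=1}^\infty(1-2^{-j})$.
   Context: A uniformly random linear map is chosen uniformly among all linear maps $\mathbb{F}_2^N\to\mathbb{F}_2^\ell$. *)

theory Defs
  imports "HOL-Analysis.Analysis" "HOL-Library.Z2"
begin

definition F2vec :: "nat \<Rightarrow> (nat \<Rightarrow> bit) set" where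
  "F2vec N = {x. \<forall>i\<ge>N. x i = 0}"

text \<open>Linear maps F_2^N -> F_2^l, normalised (extensionally) to 0 outside F_2^N
  so that the set of such maps is finite and in bijection with the linear maps.\<close>
definition F2lin :: "nat \<Rightarrow> nat \<Rightarrow> ((nat \<Rightarrow> bit) \<Rightarrow> (nat \<Rightarrow> bit)) set" where
  "F2lin N l = {h. (\<forall>x\<in>F2vec N. h x \<in> F2vec l)
      \<and> (\<forall>x\<in>F2vec N. \<forall>y\<in>F2vec N. h (\<lambda>i. x i + y i) = (\<lambda>i. h x i + h y i))
      \<and> (\<forall>c::bit. \<forall>x\<in>F2vec N. h (\<lambda>i. c * x i) = (\<lambda>i. c * h x i))
      \<and> (\<forall>x. x \<notin> F2vec N \<longrightarrow> h x = (\<lambda>_. 0))}"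

definition prob_lin :: "nat \<Rightarrow> nat \<Rightarrow> (((nat \<Rightarrow> bit) \<Rightarrow> (nat \<Rightarrow> bit)) \<Rightarrow> bool) \<Rightarrow> real" where
  "prob_lin N l P = real (card {h \<in> F2lin N l. P h}) / real (card (F2lin N l))"

definition gamma_const :: real where
  "gamma_const = (\<Prod>j. 1 - (1/2) ^ Suc j)"

end

theory Submission
  imports Defs
begin

text \<open>Write d = k + a, so that k \<le> l, take N = d + 1 and let S consist of the nonzero vectors
  of F_2^d together with the unit vector e_d. If the columns h(e_0), ..., h(e_{k-1}) are linearly
  independent and h(e_k), ..., h(e_{d-1}) lie in their span, then h has at least 2^a zeros on F_2^d,
  hence at least 2^a - 1 in S. There are at least gamma 2^{lk} independent k-tuples, 2^{ka}
  choices of the spanned columns and 2^l choices of h(e_d), out of 2^{l(d+1)} linear maps, so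
  the event has probability at least gamma 2^{(k-l)a} = gamma \<lambda>^a 2^{-a^2} \<ge> gamma^2 \<lambda>^a 2^{-a^2}.\<close>

(* Keep + and * on bit as field operations instead of rewriting them to XOR and AND. *)
declare add_bit_eq_xor[simp del] mult_bit_eq_and[simp del]

lemma UNIV_bit: "(UNIV :: bit set) = {0, 1}"
  using bit_not_zero_iff by blast

lemma card_UNIV_bit: "card (UNIV :: bit set) = 2"
  by (simp add: UNIV_bit)

lemma bit_solve_linear: "(a :: bit) + y * v = b + z * v \<Longrightarrow> y \<noteq> z \<Longrightarrow> v = a + b"
  by (cases y; cases z) (auto simp: add.assoc[symmetric])

lemma zero_in_F2vec [simp]: "(\<lambda>_. 0) \<in> F2vec n"
  by (simp add: F2vec_def)

lemma bij_betw_restrict_F2vec: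
  "bij_betw (\<lambda>x. restrict x {..<n}) (F2vec n) (PiE {..<n} (\<lambda>_. UNIV))"
proof (rule bij_betw_imageI)
  show "inj_on (\<lambda>x. restrict x {..<n}) (F2vec n)"
  proof (rule inj_onI)
    fix x y
    assume "x \<in> F2vec n" "y \<in> F2vec n" "restrict x {..<n} = restrict y {..<n}"
    then have "x i = y i" for i
      unfolding F2vec_def by (cases "i < n") (auto dest: fun_cong[of _ _ i])
    then show "x = y" ..
  qed
  show "(\<lambda>x. restrict x {..<n}) ` F2vec n = PiE {..<n} (\<lambda>_. UNIV)"
  proof (intro subset_antisym subsetI)
    fix f :: "nat \<Rightarrow> bit"
    assume f: "f \<in> PiE {..<n} (\<lambda>_. UNIV)"
    let ?x = "\<lambda>i. if i < n then f i else 0"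
    have x: "?x \<in> F2vec n"
      by (simp add: F2vec_def)
    have "restrict ?x {..<n} = restrict f {..<n}"
      by (rule restrict_ext) simp
    then have "restrict ?x {..<n} = f"
      using PiE_restrict[OF f] by simp
    then show "f \<in> (\<lambda>x. restrict x {..<n}) ` F2vec n"
      using x by (rule image_eqI[OF sym])
  qed (erule imageE, simp)
qed

lemma card_F2vec [simp]: "card (F2vec n) = 2 ^ n"
  using bij_betw_same_card[OF bij_betw_restrict_F2vec] by (simp add: card_PiE card_UNIV_bit)

lemma finite_F2vec [simp]: "finite (F2vec n)"
  using bij_betw_finite[OF bij_betw_restrict_F2vec] by (simp add: finite_PiE UNIV_bit)

lemma F2vec_mono: "m \<le> n \<Longrightarrow> F2vec m \<subseteq> F2vec n"
  by (auto simp: F2vec_def)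

definition unit_vec :: "nat \<Rightarrow> nat \<Rightarrow> bit" where
  "unit_vec j = (\<lambda>i. if i = j then 1 else 0)"

lemma unit_vec_in_F2vec: "j < n \<Longrightarrow> unit_vec j \<in> F2vec n"
  by (simp add: unit_vec_def F2vec_def)

lemma unit_vec_notin_F2vec: "unit_vec n \<notin> F2vec n"
  by (simp add: unit_vec_def F2vec_def)

lemma unit_vec_nonzero: "unit_vec j \<noteq> (\<lambda>_. 0)"
  by (simp add: unit_vec_def fun_eq_iff)

definition lincomb :: "nat \<Rightarrow> (nat \<Rightarrow> nat \<Rightarrow> bit) \<Rightarrow> (nat \<Rightarrow> bit) \<Rightarrow> nat \<Rightarrow> bit" where
  "lincomb n c y = (\<lambda>r. \<Sum>j<n. y j * c j r)"

lemma lincomb_in_F2vec: "(\<And>j. j < n \<Longrightarrow> c j \<in> F2vec l) \<Longrightarrow> lincomb n c y \<in> F2vec l"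
  by (simp add: lincomb_def F2vec_def)

lemma lincomb_cong:
  "(\<And>j. j < n \<Longrightarrow> c j = c' j) \<Longrightarrow> (\<And>j. j < n \<Longrightarrow> y j = y' j) \<Longrightarrow> lincomb n c y = lincomb n c' y'"
  unfolding lincomb_def by auto

lemma lincomb_Suc: "lincomb (Suc n) c y = (\<lambda>r. lincomb n c y r + y n * c n r)"
  by (simp add: lincomb_def)

lemma lincomb_add: "lincomb n c (\<lambda>j. y j + z j) = (\<lambda>r. lincomb n c y r + lincomb n c z r)"
  by (simp add: lincomb_def distrib_right sum.distrib)

lemma lincomb_scale: "lincomb n c (\<lambda>j. b * y j) = (\<lambda>r. b * lincomb n c y r)"
  by (simp add: lincomb_def sum_distrib_left mult.assoc)

lemma lincomb_extend_F2vec: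
  "y \<in> F2vec n \<Longrightarrow> n \<le> m \<Longrightarrow> lincomb m c y = lincomb n c y"
  unfolding lincomb_def F2vec_def by (intro ext sum.mono_neutral_right) auto

definition col_map :: "nat \<Rightarrow> (nat \<Rightarrow> nat \<Rightarrow> bit) \<Rightarrow> (nat \<Rightarrow> bit) \<Rightarrow> nat \<Rightarrow> bit" where
  "col_map N c = (\<lambda>x. if x \<in> F2vec N then lincomb N c x else (\<lambda>_. 0))"

lemma col_map_in_F2lin:
  assumes "\<And>j. j < N \<Longrightarrow> c j \<in> F2vec l"
  shows "col_map N c \<in> F2lin N l"
proof -
  have "(\<lambda>i. x i + y i) \<in> F2vec N" if "x \<in> F2vec N" "y \<in> F2vec N" for x y
    using that by (simp add: F2vec_def)
  moreover have "(\<lambda>i. b * x i) \<in> F2vec N" if "x \<in> F2vec N" for x and b :: bit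
    using that by (simp add: F2vec_def)
  ultimately show ?thesis
    unfolding F2lin_def col_map_def
    by (simp add: lincomb_in_F2vec[OF assms] lincomb_add lincomb_scale)
qed

lemma col_map_cong:
  assumes "\<And>j. j < N \<Longrightarrow> c j = c' j"
  shows "col_map N c = col_map N c'"
proof -
  have "lincomb N c = lincomb N c'"
    by (rule ext, rule lincomb_cong[OF assms]) simp_all
  then show ?thesis
    unfolding col_map_def by (simp only:)
qed

lemma col_map_unit_vec:
  assumes "j < N"
  shows "col_map N c (unit_vec j) = c j"
proof -
  have "(if P then 1 else 0) * b = (if P then b else 0)" for P and b :: bit
    by simp
  then show ?thesis
    using unit_vec_in_F2vec[OF assms] assms by (simp add: col_map_def lincomb_def unit_vec_def fun_eq_iff)
qed

lemma F2lin_add: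
  "h \<in> F2lin N l \<Longrightarrow> x \<in> F2vec N \<Longrightarrow> y \<in> F2vec N \<Longrightarrow> h (\<lambda>i. x i + y i) = (\<lambda>i. h x i + h y i)"
  by (simp add: F2lin_def)

lemma F2lin_scale:
  "h \<in> F2lin N l \<Longrightarrow> x \<in> F2vec N \<Longrightarrow> h (\<lambda>i. b * x i) = (\<lambda>i. b * h x i)"
  by (simp add: F2lin_def)

lemma F2lin_zero: "h \<in> F2lin N l \<Longrightarrow> h (\<lambda>_. 0) = (\<lambda>_. 0)"
  using F2lin_scale[of h N l "\<lambda>_. 0" 0] by simp

lemma F2lin_apply_truncation:
  assumes h: "h \<in> F2lin N l" and "n \<le> N"
  shows "h (\<lambda>i. if i < n then x i else 0) = lincomb n (\<lambda>j. h (unit_vec j)) x"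
  using \<open>n \<le> N\<close>
proof (induction n)
  case 0
  then show ?case
    using F2lin_zero[OF h] by (simp add: lincomb_def)
next
  case (Suc n)
  let ?x = "\<lambda>i. if i < n then x i else 0"
  have x: "?x \<in> F2vec N"
    using Suc.prems by (simp add: F2vec_def)
  have e: "unit_vec n \<in> F2vec N"
    using Suc.prems by (simp add: unit_vec_in_F2vec)
  then have xe: "(\<lambda>i. x n * unit_vec n i) \<in> F2vec N"
    by (simp add: F2vec_def)
  have "(\<lambda>i. if i < Suc n then x i else 0) = (\<lambda>i. ?x i + x n * unit_vec n i)"
    by (auto simp: unit_vec_def less_Suc_eq)
  then have "h (\<lambda>i. if i < Suc n then x i else 0) = (\<lambda>i. h ?x i + h (\<lambda>i. x n * unit_vec n i) i)"
    using F2lin_add[OF h x xe] by simp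
  also have "h (\<lambda>i. x n * unit_vec n i) = (\<lambda>i. x n * h (unit_vec n) i)"
    by (rule F2lin_scale[OF h e])
  also have "h ?x = lincomb n (\<lambda>j. h (unit_vec j)) x"
    using Suc by simp
  finally show ?case
    by (simp add: lincomb_Suc)
qed

lemma F2lin_eq_col_map: "h \<in> F2lin N l \<Longrightarrow> h = col_map N (\<lambda>j. h (unit_vec j))"
proof
  fix x
  assume h: "h \<in> F2lin N l"
  show "h x = col_map N (\<lambda>j. h (unit_vec j)) x"
  proof (cases "x \<in> F2vec N")
    case True
    then have "(\<lambda>i. if i < N then x i else 0) = x"
      by (auto simp: F2vec_def)
    then have "h x = lincomb N (\<lambda>j. h (unit_vec j)) x"
      using F2lin_apply_truncation[OF h order_refl, of x] by simp
    then show ?thesis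
      using True by (simp add: col_map_def)
  next
    case False
    then show ?thesis
      using h by (simp add: F2lin_def col_map_def)
  qed
qed

lemma F2lin_eq_image_col_map: "F2lin N l = col_map N ` PiE {..<N} (\<lambda>_. F2vec l)"
proof (intro subset_antisym subsetI)
  fix h
  assume h: "h \<in> F2lin N l"
  have "col_map N (\<lambda>j. h (unit_vec j)) = col_map N (restrict (\<lambda>j. h (unit_vec j)) {..<N})"
    by (rule col_map_cong) simp
  moreover have "restrict (\<lambda>j. h (unit_vec j)) {..<N} \<in> PiE {..<N} (\<lambda>_. F2vec l)"
    using h unit_vec_in_F2vec by (auto simp: F2lin_def)
  ultimately show "h \<in> col_map N ` PiE {..<N} (\<lambda>_. F2vec l)"
    using F2lin_eq_col_map[OF h] by (metis image_eqI)
qed (auto intro: col_map_in_F2lin)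

lemma inj_on_col_map: "inj_on (col_map N) (PiE {..<N} (\<lambda>_. F2vec l))"
proof (rule inj_onI)
  fix c c'
  assume c: "c \<in> PiE {..<N} (\<lambda>_. F2vec l)" and c': "c' \<in> PiE {..<N} (\<lambda>_. F2vec l)"
    and eq: "col_map N c = col_map N c'"
  have "c j = c' j" if "j \<in> {..<N}" for j
    using that col_map_unit_vec[of j N c] col_map_unit_vec[of j N c'] eq by simp
  then show "c = c'"
    by (rule PiE_ext[OF c c'])
qed

lemma card_F2lin: "card (F2lin N l) = 2 ^ (l * N)"
  unfolding F2lin_eq_image_col_map
  by (simp add: card_image[OF inj_on_col_map] card_PiE power_mult)

lemma finite_F2lin: "finite (F2lin N l)"
  unfolding F2lin_eq_image_col_map by (simp add: finite_PiE)

lemma prob_lin_mono: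
  assumes "\<And>h. h \<in> F2lin N l \<Longrightarrow> P h \<Longrightarrow> Q h"
  shows "prob_lin N l P \<le> prob_lin N l Q"
  unfolding prob_lin_def
  by (intro divide_right_mono of_nat_mono card_mono) (use assms finite_F2lin in auto)

definition indep_cols :: "nat \<Rightarrow> nat \<Rightarrow> (nat \<Rightarrow> nat \<Rightarrow> bit) set" where
  "indep_cols l k = {c \<in> PiE {..<k} (\<lambda>_. F2vec l). inj_on (lincomb k c) (F2vec k)}"

lemma finite_indep_cols: "finite (indep_cols l k)"
  unfolding indep_cols_def by (simp add: finite_PiE)

lemma F2vec_Suc_upd_zero: "x \<in> F2vec (Suc i) \<Longrightarrow> x(i := 0) \<in> F2vec i"
  by (simp add: F2vec_def)

lemma inj_on_lincomb_Suc:
  assumes inj: "inj_on (lincomb i c) (F2vec i)" and v: "v \<notin> lincomb i c ` F2vec i"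
  shows "inj_on (lincomb (Suc i) (c(i := v))) (F2vec (Suc i))"
proof (rule inj_onI)
  fix y z
  assume y: "y \<in> F2vec (Suc i)" and z: "z \<in> F2vec (Suc i)"
    and eq: "lincomb (Suc i) (c(i := v)) y = lincomb (Suc i) (c(i := v)) z"
  have split: "lincomb (Suc i) (c(i := v)) u = (\<lambda>r. lincomb i c (u(i := 0)) r + u i * v r)" for u
  proof -
    have "lincomb i (c(i := v)) u = lincomb i c (u(i := 0))"
      by (rule lincomb_cong) auto
    then show ?thesis
      by (simp add: lincomb_Suc)
  qed
  have y0: "y(i := 0) \<in> F2vec i" and z0: "z(i := 0) \<in> F2vec i"
    using y z by (simp_all add: F2vec_Suc_upd_zero)
  have eq_r: "lincomb i c (y(i := 0)) r + y i * v r = lincomb i c (z(i := 0)) r + z i * v r" for r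
    using fun_cong[OF eq, of r] unfolding split by simp
  show "y = z"
  proof (cases "y i = z i")
    case True
    then have "lincomb i c (y(i := 0)) = lincomb i c (z(i := 0))"
      using eq_r by (simp add: fun_eq_iff)
    then have "y(i := 0) = z(i := 0)"
      using inj y0 z0 by (simp add: inj_on_def)
    then show ?thesis
      using True by (metis fun_upd_triv fun_upd_upd)
  next
    case False
    have "v = (\<lambda>r. lincomb i c (y(i := 0)) r + lincomb i c (z(i := 0)) r)"
      using bit_solve_linear[OF eq_r False] by (rule ext)
    also have "\<dots> = lincomb i c (\<lambda>j. (y(i := 0)) j + (z(i := 0)) j)"
      by (rule lincomb_add[symmetric])
    finally have "v = lincomb i c (\<lambda>j. (y(i := 0)) j + (z(i := 0)) j)" .
    moreover have "(\<lambda>j. (y(i := 0)) j + (z(i := 0)) j) \<in> F2vec i"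
      using y0 z0 by (simp add: F2vec_def)
    ultimately show ?thesis
      using v by blast
  qed
qed

lemma card_complement_span:
  assumes "c \<in> indep_cols l i"
  shows "card (F2vec l - lincomb i c ` F2vec i) = 2 ^ l - 2 ^ i"
proof -
  have "card (lincomb i c ` F2vec i) = 2 ^ i"
    using assms by (simp add: indep_cols_def card_image)
  moreover have "lincomb i c ` F2vec i \<subseteq> F2vec l"
    using assms by (auto simp: indep_cols_def intro!: lincomb_in_F2vec)
  ultimately show ?thesis
    by (simp add: card_Diff_subset finite_subset)
qed

lemma card_indep_cols_Suc_ge:
  "card (indep_cols l i) * (2 ^ l - 2 ^ i) \<le> card (indep_cols l (Suc i))"
proof -
  let ?S = "Sigma (indep_cols l i) (\<lambda>c. F2vec l - lincomb i c ` F2vec i)"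
  define extend where "extend p = (fst p)(i := snd p)" for p :: "(nat \<Rightarrow> nat \<Rightarrow> bit) \<times> (nat \<Rightarrow> bit)"
  have "card ?S = card (indep_cols l i) * (2 ^ l - 2 ^ i)"
    by (simp add: card_SigmaI finite_indep_cols card_complement_span)
  moreover have "extend ` ?S \<subseteq> indep_cols l (Suc i)"
  proof
    fix q
    assume "q \<in> extend ` ?S"
    then obtain c v where c: "c \<in> indep_cols l i" and v: "v \<in> F2vec l" "v \<notin> lincomb i c ` F2vec i"
      and q: "q = c(i := v)"
      unfolding extend_def by auto
    have "c(i := v) \<in> PiE {..<Suc i} (\<lambda>_. F2vec l)"
      using c v by (auto simp: indep_cols_def PiE_def Pi_def extensional_def)
    moreover have "inj_on (lincomb (Suc i) (c(i := v))) (F2vec (Suc i))"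
      using c v inj_on_lincomb_Suc by (simp add: indep_cols_def)
    ultimately show "q \<in> indep_cols l (Suc i)"
      unfolding indep_cols_def q by blast
  qed
  moreover have "inj_on extend ?S"
  proof (rule inj_onI)
    fix p q
    assume p: "p \<in> ?S" and q: "q \<in> ?S" and eq: "extend p = extend q"
    have "fst p i = undefined" "fst q i = undefined"
      using p q by (auto simp: indep_cols_def PiE_def extensional_def)
    then have "fst p = fst q" and "snd p = snd q"
      using eq unfolding extend_def by (metis fun_upd_triv fun_upd_upd, metis fun_upd_same)
    then show "p = q"
      by (simp add: prod_eq_iff)
  qed
  ultimately show ?thesis
    using card_inj_on_le finite_indep_cols by metis
qed

lemma card_indep_cols_ge: "(\<Prod>j<k. 2 ^ l - 2 ^ j) \<le> card (indep_cols l k)"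
proof (induction k)
  case 0
  have "(\<lambda>_. undefined) \<in> indep_cols l 0"
    by (auto simp: indep_cols_def F2vec_def inj_on_def)
  then have "card (indep_cols l 0) \<noteq> 0"
    using finite_indep_cols by (metis card_0_eq empty_iff)
  then show ?case
    by simp
next
  case (Suc k)
  then show ?case
    using card_indep_cols_Suc_ge[of l k] by (simp add: order_trans[OF mult_le_mono1])
qed

lemma gamma_factor_bounds: "0 \<le> 1 - (1/2 :: real) ^ Suc j" "1 - (1/2 :: real) ^ Suc j \<le> 1"
proof -
  have "(1/2 :: real) ^ Suc j \<le> 1"
    by (rule power_le_one) simp_all
  then show "0 \<le> 1 - (1/2 :: real) ^ Suc j" "1 - (1/2 :: real) ^ Suc j \<le> 1"
    by simp_all
qed

lemma convergent_prod_gamma: "convergent_prod (\<lambda>j. 1 - (1/2 :: real) ^ Suc j)"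
proof (intro abs_convergent_prod_imp_convergent_prod summable_imp_abs_convergent_prod)
  show "summable (\<lambda>j. norm (1 - (1/2 :: real) ^ Suc j - 1))"
    using summable_geometric[of "1/2 :: real"] by (simp add: summable_Suc_iff)
qed

lemma gamma_nonneg: "0 \<le> gamma_const"
proof -
  have "(\<lambda>n. \<Prod>j\<le>n. 1 - (1/2 :: real) ^ Suc j) \<longlonglongrightarrow> gamma_const"
    unfolding gamma_const_def by (rule convergent_prod_LIMSEQ[OF convergent_prod_gamma])
  then show ?thesis
    by (rule LIMSEQ_le_const) (intro exI allI impI prod_nonneg gamma_factor_bounds(1))
qed

lemma gamma_le_prod: "gamma_const \<le> (\<Prod>j<k. 1 - (1/2 :: real) ^ Suc j)"
  unfolding gamma_const_def
proof (rule prodinf_le_const[OF convergent_prod_gamma])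
  fix n
  assume "k \<le> n"
  then have "(\<Prod>j<n. 1 - (1/2 :: real) ^ Suc j)
      = (\<Prod>j<k. 1 - (1/2 :: real) ^ Suc j) * (\<Prod>j\<in>{k..<n}. 1 - (1/2 :: real) ^ Suc j)"
    by (simp add: prod.atLeastLessThan_concat flip: atLeast0LessThan)
  also have "\<dots> \<le> (\<Prod>j<k. 1 - (1/2 :: real) ^ Suc j)"
    by (intro mult_right_le_one_le prod_nonneg prod_le_1 conjI gamma_factor_bounds)
  finally show "(\<Prod>j<n. 1 - (1/2 :: real) ^ Suc j) \<le> (\<Prod>j<k. 1 - (1/2 :: real) ^ Suc j)" .
qed

lemma gamma_le_one: "gamma_const \<le> 1"
  using gamma_le_prod[of 0] by simp

lemma gamma_mult_le_card_indep_cols: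
  assumes "k \<le> l"
  shows "gamma_const * 2 ^ (l * k) \<le> real (card (indep_cols l k))"
proof -
  have factor_le: "2 ^ l * (1 - (1/2 :: real) ^ (k - j)) \<le> 2 ^ l - 2 ^ j" if "j < k" for j
  proof -
    have "(2 :: real) ^ j * 2 ^ (k - j) \<le> 2 ^ l"
      using that assms by (simp flip: power_add)
    then have "(2 :: real) ^ j \<le> 2 ^ l * (1/2) ^ (k - j)"
      by (simp add: power_one_over field_simps)
    then show ?thesis
      by (simp add: algebra_simps)
  qed
  \<comment> \<open>the factor 1 - 2^{-(j+1)} of gamma is matched with the factor 2^l - 2^{k-1-j}\<close>
  have "(\<Prod>j<k. 1 - (1/2 :: real) ^ Suc j) = (\<Prod>j<k. 1 - (1/2 :: real) ^ Suc (k - Suc j))"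
    by (rule prod.nat_diff_reindex[symmetric])
  also have "\<dots> = (\<Prod>j<k. 1 - (1/2 :: real) ^ (k - j))"
    by (rule prod.cong) (simp_all add: Suc_diff_Suc)
  finally have reindex: "(\<Prod>j<k. 1 - (1/2 :: real) ^ Suc j) = (\<Prod>j<k. 1 - (1/2 :: real) ^ (k - j))" .
  have "gamma_const * 2 ^ (l * k) \<le> (\<Prod>j<k. 1 - (1/2 :: real) ^ Suc j) * 2 ^ (l * k)"
    by (rule mult_right_mono[OF gamma_le_prod]) simp
  also have "\<dots> = (\<Prod>j<k. 1 - (1/2 :: real) ^ (k - j)) * (\<Prod>j<k. 2 ^ l)"
    unfolding reindex by (simp add: power_mult)
  also have "\<dots> = (\<Prod>j<k. 2 ^ l * (1 - (1/2 :: real) ^ (k - j)))"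
    by (simp add: prod.distrib mult.commute)
  also have "\<dots> \<le> (\<Prod>j<k. 2 ^ l - 2 ^ j :: real)"
    by (intro prod_mono conjI factor_le) (simp_all add: power_le_one)
  also have "\<dots> = real (\<Prod>j<k. 2 ^ l - 2 ^ j :: nat)"
    using assms by (simp add: of_nat_diff)
  also have "\<dots> \<le> real (card (indep_cols l k))"
    using card_indep_cols_ge by (rule of_nat_mono)
  finally show ?thesis .
qed

lemma card_kernel_lincomb_ge:
  assumes spanned: "\<And>j. j \<in> {k..<k+a} \<Longrightarrow> c j = lincomb k c (t j)"
  shows "2 ^ a \<le> card {x \<in> F2vec (k+a). lincomb (k+a) c x = (\<lambda>_. 0)}"
proof -
  \<comment> \<open>psi y = \<Sum>_j y_j (e_j + t_j): each e_j + t_j lies in the kernel\<close>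
  define psi where "psi y = (\<lambda>i. if i < k then (\<Sum>j\<in>{k..<k+a}. y j * t j i) else if i < k + a then y i else 0)"
    for y :: "nat \<Rightarrow> bit"
  let ?Y = "PiE {k..<k+a} (\<lambda>_. UNIV :: bit set)"
  let ?K = "{x \<in> F2vec (k+a). lincomb (k+a) c x = (\<lambda>_. 0)}"
  have inj: "inj_on psi ?Y"
  proof (rule inj_onI)
    fix y y'
    assume y: "y \<in> ?Y" and y': "y' \<in> ?Y" and eq: "psi y = psi y'"
    have "y j = y' j" if "j \<in> {k..<k+a}" for j
      using fun_cong[OF eq, of j] that by (simp add: psi_def)
    then show "y = y'"
      by (rule PiE_ext[OF y y'])
  qed
  have sub: "psi ` ?Y \<subseteq> ?K"
  proof (intro subsetI, elim imageE)
    fix x y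
    assume x: "x = psi y"
    have "lincomb (k+a) c x r = 0" for r
    proof -
      have "lincomb (k+a) c x r = (\<Sum>j<k. x j * c j r) + (\<Sum>j\<in>{k..<k+a}. x j * c j r)"
        unfolding lincomb_def by (simp add: sum.atLeastLessThan_concat flip: atLeast0LessThan)
      also have "(\<Sum>j<k. x j * c j r) = (\<Sum>j<k. \<Sum>i\<in>{k..<k+a}. y i * (t i j * c j r))"
        unfolding x psi_def by (simp add: sum_distrib_right mult.assoc)
      also have "\<dots> = (\<Sum>i\<in>{k..<k+a}. y i * lincomb k c (t i) r)"
        unfolding lincomb_def by (simp add: sum.swap[of _ "{..<k}"] sum_distrib_left)
      also have "(\<Sum>j\<in>{k..<k+a}. x j * c j r) = (\<Sum>i\<in>{k..<k+a}. y i * lincomb k c (t i) r)"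
        unfolding x psi_def using spanned by (simp add: mult.commute)
      finally show ?thesis
        by simp
    qed
    moreover have "x \<in> F2vec (k+a)"
      unfolding x psi_def F2vec_def by simp
    ultimately show "x \<in> ?K"
      by (simp add: fun_eq_iff)
  qed
  have "2 ^ a = card (psi ` ?Y)"
    by (simp add: card_image[OF inj] card_PiE card_UNIV_bit)
  also have "\<dots> \<le> card ?K"
    using sub by (intro card_mono) simp_all
  finally show ?thesis .
qed

definition spanned_cols :: "nat \<Rightarrow> nat \<Rightarrow> (nat \<Rightarrow> nat \<Rightarrow> bit) \<Rightarrow> (nat \<Rightarrow> nat \<Rightarrow> bit) \<Rightarrow> (nat \<Rightarrow> bit)
    \<Rightarrow> nat \<Rightarrow> nat \<Rightarrow> bit" where
  "spanned_cols k a c t w =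
    (\<lambda>j. if j < k then c j
      else if j < k + a then lincomb k c (t j)
      else if j = k + a then w
      else undefined)"

lemma spanned_cols_in_PiE:
  assumes c: "c \<in> PiE {..<k} (\<lambda>_. F2vec l)" and w: "w \<in> F2vec l"
  shows "spanned_cols k a c t w \<in> PiE {..<Suc (k + a)} (\<lambda>_. F2vec l)"
proof -
  have "lincomb k c y \<in> F2vec l" for y
    using c by (intro lincomb_in_F2vec) auto
  then show ?thesis
    using c w by (auto simp: spanned_cols_def PiE_def Pi_def extensional_def)
qed

lemma inj_on_spanned_cols:
  "inj_on (\<lambda>(c, t, w). spanned_cols k a c t w) (indep_cols l k \<times> PiE {k..<k+a} (\<lambda>_. F2vec k) \<times> F2vec l)"
proof (rule inj_onI)
  fix p p'
  assume p: "p \<in> indep_cols l k \<times> PiE {k..<k+a} (\<lambda>_. F2vec k) \<times> F2vec l"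
    and p': "p' \<in> indep_cols l k \<times> PiE {k..<k+a} (\<lambda>_. F2vec k) \<times> F2vec l"
    and eq: "(\<lambda>(c, t, w). spanned_cols k a c t w) p = (\<lambda>(c, t, w). spanned_cols k a c t w) p'"
  obtain c t w c' t' w' where p_eq: "p = (c, t, w)" and p'_eq: "p' = (c', t', w')"
    by (metis prod_cases3)
  have c: "c \<in> indep_cols l k" and t: "t \<in> PiE {k..<k+a} (\<lambda>_. F2vec k)"
    and c': "c' \<in> indep_cols l k" and t': "t' \<in> PiE {k..<k+a} (\<lambda>_. F2vec k)"
    using p p' by (simp_all add: p_eq p'_eq)
  have eq_j: "spanned_cols k a c t w j = spanned_cols k a c' t' w' j" for j
    using eq by (simp add: p_eq p'_eq)
  have "c j = c' j" if "j \<in> {..<k}" for j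
    using eq_j[of j] that by (simp add: spanned_cols_def)
  then have cc: "c = c'"
    using c c' by (intro PiE_ext[of c "{..<k}" _ c']) (auto simp: indep_cols_def)
  have "t j = t' j" if j: "j \<in> {k..<k+a}" for j
  proof -
    have "lincomb k c (t j) = lincomb k c (t' j)"
      using eq_j[of j] j cc by (simp add: spanned_cols_def)
    moreover have "t j \<in> F2vec k" "t' j \<in> F2vec k"
      using t t' j by auto
    ultimately show ?thesis
      using c by (simp add: indep_cols_def inj_on_def)
  qed
  then have "t = t'"
    by (rule PiE_ext[OF t t'])
  moreover have "w = w'"
    using eq_j[of "k + a"] by (simp add: spanned_cols_def)
  ultimately show "p = p'"
    using cc by (simp add: p_eq p'_eq)
qed

lemma card_kernel_col_map_spanned_cols_ge:
  "2 ^ a \<le> card {x \<in> F2vec (k + a). col_map (Suc (k + a)) (spanned_cols k a c t w) x = (\<lambda>_. 0)}"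
proof -
  let ?c = "spanned_cols k a c t w"
  have "lincomb k ?c = lincomb k c"
    by (intro ext lincomb_cong) (simp_all add: spanned_cols_def)
  then have "2 ^ a \<le> card {x \<in> F2vec (k + a). lincomb (k + a) ?c x = (\<lambda>_. 0)}"
    by (intro card_kernel_lincomb_ge[of k a _ t]) (simp add: spanned_cols_def)
  moreover have "col_map (Suc (k + a)) ?c x = lincomb (k + a) ?c x" if "x \<in> F2vec (k + a)" for x
    using that F2vec_mono[of "k + a" "Suc (k + a)"] lincomb_extend_F2vec[OF that, of "Suc (k + a)"]
    by (auto simp: col_map_def)
  then have "{x \<in> F2vec (k + a). col_map (Suc (k + a)) ?c x = (\<lambda>_. 0)}
      = {x \<in> F2vec (k + a). lincomb (k + a) ?c x = (\<lambda>_. 0)}"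
    by auto
  ultimately show ?thesis
    by simp
qed

lemma card_large_kernel_ge:
  "card (indep_cols l k) * 2 ^ (k * a) * 2 ^ l
    \<le> card {h \<in> F2lin (Suc (k + a)) l. 2 ^ a \<le> card {x \<in> F2vec (k + a). h x = (\<lambda>_. 0)}}"
    (is "_ \<le> card ?good")
proof -
  let ?D = "indep_cols l k \<times> PiE {k..<k+a} (\<lambda>_. F2vec k) \<times> F2vec l"
  let ?cols = "\<lambda>(c, t, w). spanned_cols k a c t w"
  have cols: "?cols ` ?D \<subseteq> PiE {..<Suc (k + a)} (\<lambda>_. F2vec l)"
    by (auto simp: indep_cols_def intro!: spanned_cols_in_PiE)
  have "card (indep_cols l k) * 2 ^ (k * a) * 2 ^ l = card ?D"
    by (simp add: card_cartesian_product card_PiE flip: power_mult)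
  also have "\<dots> = card ((col_map (Suc (k + a)) \<circ> ?cols) ` ?D)"
    using inj_on_spanned_cols inj_on_subset[OF inj_on_col_map cols]
    by (intro card_image[symmetric] comp_inj_on)
  also have "\<dots> \<le> card ?good"
  proof (intro card_mono)
    show "finite ?good"
      by (simp add: finite_F2lin)
    show "(col_map (Suc (k + a)) \<circ> ?cols) ` ?D \<subseteq> ?good"
    proof
      fix h
      assume "h \<in> (col_map (Suc (k + a)) \<circ> ?cols) ` ?D"
      then obtain c t w where ctw: "(c, t, w) \<in> ?D" and h: "h = col_map (Suc (k + a)) (spanned_cols k a c t w)"
        by auto
      have "spanned_cols k a c t w \<in> PiE {..<Suc (k + a)} (\<lambda>_. F2vec l)"
        using ctw by (intro spanned_cols_in_PiE) (auto simp: indep_cols_def)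
      then have "h \<in> F2lin (Suc (k + a)) l"
        unfolding h by (intro col_map_in_F2lin) auto
      then show "h \<in> ?good"
        unfolding h using card_kernel_col_map_spanned_cols_ge by simp
    qed
  qed
  finally show ?thesis .
qed

lemma prob_large_kernel_ge:
  assumes "k \<le> l"
  shows "gamma_const * 2 ^ (k * a) / 2 ^ (l * a)
    \<le> prob_lin (Suc (k + a)) l (\<lambda>h. 2 ^ a \<le> card {x \<in> F2vec (k + a). h x = (\<lambda>_. 0)})"
proof -
  let ?good = "{h \<in> F2lin (Suc (k + a)) l. 2 ^ a \<le> card {x \<in> F2vec (k + a). h x = (\<lambda>_. 0)}}"
  have "gamma_const * 2 ^ (k * a) / 2 ^ (l * a)
      = gamma_const * 2 ^ (l * k) * 2 ^ (k * a) * 2 ^ l / 2 ^ (l * Suc (k + a))"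
    by (simp add: algebra_simps power_add)
  also have "\<dots> \<le> real (card (indep_cols l k)) * 2 ^ (k * a) * 2 ^ l / 2 ^ (l * Suc (k + a))"
    using gamma_mult_le_card_indep_cols[OF assms] by (intro divide_right_mono mult_right_mono) simp_all
  also have "\<dots> \<le> real (card ?good) / 2 ^ (l * Suc (k + a))"
    using of_nat_mono[OF card_large_kernel_ge[of l k a], where 'a=real] by (intro divide_right_mono) simp_all
  also have "\<dots> = prob_lin (Suc (k + a)) l (\<lambda>h. 2 ^ a \<le> card {x \<in> F2vec (k + a). h x = (\<lambda>_. 0)})"
    by (simp add: prob_lin_def card_F2lin)
  finally show ?thesis .
qed

definition nonzero_F2vec_with_unit :: "nat \<Rightarrow> (nat \<Rightarrow> bit) set" where
  "nonzero_F2vec_with_unit n = insert (unit_vec n) (F2vec n - {\<lambda>_. 0})"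

lemma nonzero_F2vec_with_unit_subset: "nonzero_F2vec_with_unit n \<subseteq> F2vec (Suc n) - {\<lambda>_. 0}"
  using F2vec_mono[of n "Suc n"] unit_vec_in_F2vec[of n "Suc n"] unit_vec_nonzero[of n]
  by (auto simp: nonzero_F2vec_with_unit_def)

lemma card_nonzero_F2vec_with_unit: "card (nonzero_F2vec_with_unit n) = 2 ^ n"
  using unit_vec_notin_F2vec[of n]
  by (simp add: nonzero_F2vec_with_unit_def card_Diff_singleton Suc_diff_1)

lemma card_kernel_le_Suc_card_kernel_nonzero_F2vec_with_unit:
  "card {x \<in> F2vec n. h x = (\<lambda>_. 0)} \<le> Suc (card {x \<in> nonzero_F2vec_with_unit n. h x = (\<lambda>_. 0)})"
proof -
  let ?K = "{x \<in> nonzero_F2vec_with_unit n. h x = (\<lambda>_. 0)}"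
  have fin: "finite ?K"
    by (simp add: nonzero_F2vec_with_unit_def)
  have "card {x \<in> F2vec n. h x = (\<lambda>_. 0)} \<le> card (insert (\<lambda>_. 0) ?K)"
    using fin by (intro card_mono) (auto simp: nonzero_F2vec_with_unit_def)
  also have "\<dots> \<le> Suc (card ?K)"
    using fin by (simp add: card_insert_if)
  finally show ?thesis .
qed

theorem propositionB5:
  fixes l d a :: nat
  assumes "1 \<le> a" and "int d - int l \<le> int a" and "a \<le> d"
  shows "\<exists>N::nat. N > 0 \<and> (\<exists>S. S \<subseteq> F2vec N - {\<lambda>_. 0} \<and> card S = 2 ^ d \<and>
    prob_lin N l (\<lambda>h. real (card {x \<in> S. h x = (\<lambda>_. 0)}) > 2 ^ a - 2)
      \<ge> gamma_const ^ 2 * (2 ^ d / 2 ^ l) ^ a * (1 / 2 ^ (a ^ 2)))"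
proof -
  define k where "k = d - a"
  have "k \<le> l" and d: "d = k + a"
    using assms by (auto simp: k_def)
  let ?S = "nonzero_F2vec_with_unit d"
  have "(2 :: real) ^ (d * a) = 2 ^ (k * a) * 2 ^ (a ^ 2)"
    by (simp add: d algebra_simps power_add power2_eq_square)
  then have "(2 ^ d / 2 ^ l) ^ a * (1 / 2 ^ (a ^ 2)) = (2 :: real) ^ (k * a) / 2 ^ (l * a)"
    by (simp add: power_divide flip: power_mult)
  then have "gamma_const ^ 2 * (2 ^ d / 2 ^ l) ^ a * (1 / 2 ^ (a ^ 2))
      = gamma_const ^ 2 * (2 ^ (k * a) / 2 ^ (l * a))"
    by (simp only: mult.assoc)
  also have "\<dots> \<le> gamma_const * 2 ^ (k * a) / 2 ^ (l * a)"
    using mult_right_mono[of "gamma_const ^ 2" gamma_const "2 ^ (k * a) / 2 ^ (l * a)"]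
      gamma_nonneg gamma_le_one by (simp add: power2_eq_square mult_left_le)
  also have "\<dots> \<le> prob_lin (Suc d) l (\<lambda>h. 2 ^ a \<le> card {x \<in> F2vec d. h x = (\<lambda>_. 0)})"
    using prob_large_kernel_ge[OF \<open>k \<le> l\<close>, of a] by (simp add: d)
  also have "\<dots> \<le> prob_lin (Suc d) l (\<lambda>h. real (card {x \<in> ?S. h x = (\<lambda>_. 0)}) > 2 ^ a - 2)"
  proof (rule prob_lin_mono)
    fix h :: "(nat \<Rightarrow> bit) \<Rightarrow> nat \<Rightarrow> bit"
    assume "2 ^ a \<le> card {x \<in> F2vec d. h x = (\<lambda>_. 0)}"
    then have "2 ^ a \<le> Suc (card {x \<in> ?S. h x = (\<lambda>_. 0)})"
      using card_kernel_le_Suc_card_kernel_nonzero_F2vec_with_unit le_trans by blast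
    then have "(2 :: real) ^ a \<le> 1 + real (card {x \<in> ?S. h x = (\<lambda>_. 0)})"
      using of_nat_mono[where 'a=real] by fastforce
    then show "real (card {x \<in> ?S. h x = (\<lambda>_. 0)}) > 2 ^ a - 2"
      by simp
  qed
  finally show ?thesis
    using nonzero_F2vec_with_unit_subset card_nonzero_F2vec_with_unit by blast
qed

end
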